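(* For any non-hierarchical query $Q$, $\mathsf{w}(\widehat Q)\ge\frac32$, where $\widehat Q$ is the multivariate extension of $Q$.
   Context: A query is a full conjunctive query $Q = R_1(\mathbf X_1)\wedge\cdots\wedge R_k(\mathbf X_k)$. For a variable $X$, $\mathrm{at}(X)$ is the set of atoms containing $X$; $Q$ is hierarchical if for any two variables $X,Y$, either $\mathrm{at}(X)\subseteq\mathrm{at}(Y)$, $\mathrm{at}(Y)\subseteq\mathrm{at}(X)$, or $\mathrm{at}(X)\cap\mathrm{at}(Y)=\emptyset$. Multivariate extension: take fresh variables $Z_1,\dots,Z_k$. For a permutation $\sigma$ of $[k]$, the component $\widehat Q_\sigma$ replaces each atom $R_{\sigma_i}(\mathbf X_{\sigma_i})$ by $\widehat R_{\sigma_i}(Z_1,\dots,Z_i,\mathbf X_{\sigma_i})$; $\widehat Q$ is the union of all components. Fractional hypertree width $\mathsf{w}(P)$ of a query $P$: minimum over tree decompositions of $P$ (trees with bags of variables covering every atom schema, the bags containing any variable forming a connected subtree) of the maximum over bags $B$ of the fractional edge cover number of $P$ restricted to $B$ (each atom schema intersected with $B$). For a union of queries, $\mathsf{w}$ is the maximum over the queries. *)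

theory Defs
  imports Complex_Main "HOL-Combinatorics.Permutations"
begin

text \<open>A full conjunctive query is represented by the list of its atom schemas:
  atom number i has variable set Q ! i. Relation symbols do not affect
  hierarchy or width, so only the hypergraph of the query is kept.\<close>

type_synonym 'v query = "'v set list"

definition atoms_of :: "'v query \<Rightarrow> 'v \<Rightarrow> nat set" where
  "atoms_of Q x = {i. i < length Q \<and> x \<in> Q ! i}"

definition hierarchical :: "'v query \<Rightarrow> bool" where
  "hierarchical Q \<longleftrightarrow> (\<forall>x y. atoms_of Q x \<subseteq> atoms_of Q y \<or> atoms_of Q y \<subseteq> atoms_of Q x
      \<or> atoms_of Q x \<inter> atoms_of Q y = {})"

definition qvars :: "'v query \<Rightarrow> 'v set" where
  "qvars Q = \<Union> (set Q)"

text \<open>Component of the multivariate extension for a permutation sigma of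
  the atom indices (0-based): position i gets the fresh variables
  Z_0,...,Z_i (encoded as Inr 0..Inr i) plus the variables of atom sigma i.\<close>

definition mv_component :: "'v query \<Rightarrow> (nat \<Rightarrow> nat) \<Rightarrow> ('v + nat) query" where
  "mv_component Q \<sigma> = map (\<lambda>i. Inr ` {..i} \<union> Inl ` (Q ! \<sigma> i)) [0..<length Q]"

definition frac_edge_cover :: "'v query \<Rightarrow> 'v set \<Rightarrow> real" where
  "frac_edge_cover Q B = Inf {(\<Sum>i<length Q. w i) | w.
      (\<forall>i. 0 \<le> w i) \<and>
      (\<forall>x\<in>B. (\<Sum>i\<in>{i. i < length Q \<and> x \<in> Q ! i \<inter> B}. w i) \<ge> 1)}"

definition edge_rel :: "nat set set \<Rightarrow> nat set \<Rightarrow> (nat \<times> nat) set" where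
  "edge_rel E S = {(a, b). {a, b} \<in> E \<and> a \<in> S \<and> b \<in> S}"

definition connected_in :: "nat set set \<Rightarrow> nat set \<Rightarrow> bool" where
  "connected_in E S \<longleftrightarrow> (\<forall>u\<in>S. \<forall>v\<in>S. (u, v) \<in> (edge_rel E S)\<^sup>*)"

definition is_tree :: "nat set \<Rightarrow> nat set set \<Rightarrow> bool" where
  "is_tree N E \<longleftrightarrow> finite N \<and> N \<noteq> {} \<and>
     (\<forall>e\<in>E. \<exists>a b. a \<in> N \<and> b \<in> N \<and> a \<noteq> b \<and> e = {a, b}) \<and>
     connected_in E N \<and> card E = card N - 1"

definition is_tree_decomp :: "'v query \<Rightarrow> nat set \<Rightarrow> nat set set \<Rightarrow> (nat \<Rightarrow> 'v set) \<Rightarrow> bool" where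
  "is_tree_decomp P N E bag \<longleftrightarrow> is_tree N E \<and>
     (\<forall>t\<in>N. bag t \<subseteq> qvars P) \<and>
     (\<forall>A\<in>set P. \<exists>t\<in>N. A \<subseteq> bag t) \<and>
     (\<forall>x. connected_in E {t\<in>N. x \<in> bag t})"

definition fhw :: "'v query \<Rightarrow> real" where
  "fhw P = Inf {Max ((\<lambda>t. frac_edge_cover P (bag t)) ` N) | N E bag. is_tree_decomp P N E bag}"

text \<open>Width of the multivariate extension (union of all components): maximum over components.\<close>

definition fhw_mv_ext :: "'v query \<Rightarrow> real" where
  "fhw_mv_ext Q = Max {fhw (mv_component Q \<sigma>) | \<sigma>. \<sigma> permutes {..<length Q}}"

end

theory Submission
  imports Defs
begin

text \<open>If Q is not hierarchical, there are variables x and y and atoms containing both of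
  them, only x, and only y. Order the atoms so that those containing both x and y come
  first, at positions below a. In the corresponding component of the multivariate
  extension the fresh variable Z_a occurs exactly in the later atoms, so x, y and Z_a are
  pairwise covered by atoms while no atom contains all three. In a tree decomposition the
  subtrees of bags containing x, y and Z_a then intersect pairwise, hence by the Helly
  property of subtrees some bag contains all three; since every atom covers at most two of
  them, a fractional edge cover of that bag has weight at least 3/2.\<close>

lemma card_Un_Int3:
  assumes "finite A" "finite B" "finite C"
  shows "card A + card B + card C + card (A \<inter> B \<inter> C)
    = card (A \<union> B \<union> C) + card (A \<inter> B) + card (A \<inter> C) + card (B \<inter> C)"
proof -
  have "card (A \<union> B) + card C = card (A \<union> B \<union> C) + card ((A \<inter> C) \<union> (B \<inter> C))"
    using card_Un_Int[of "A \<union> B" C] assms by (simp add: Int_Un_distrib2)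
  moreover have "card A + card B = card (A \<union> B) + card (A \<inter> B)"
    using card_Un_Int[OF assms(1,2)] .
  moreover have "card (A \<inter> C) + card (B \<inter> C) = card ((A \<inter> C) \<union> (B \<inter> C)) + card (A \<inter> B \<inter> C)"
    using card_Un_Int[of "A \<inter> C" "B \<inter> C"] assms by (simp add: Int_left_commute inf_commute)
  ultimately show ?thesis by linarith
qed

definition edges_within :: "nat set set \<Rightarrow> nat set \<Rightarrow> nat set set" where
  "edges_within E S = {e\<in>E. e \<subseteq> S}"

lemma edges_within_Int: "edges_within E (A \<inter> B) = edges_within E A \<inter> edges_within E B"
  by (auto simp: edges_within_def)

lemma rtrancl_edge_rel_enters:
  assumes "(u, s) \<in> (edge_rel E V)\<^sup>*" "u \<notin> S" "s \<in> S"
  shows "\<exists>a b. {a, b} \<in> E \<and> a \<in> V \<and> b \<in> V \<and> a \<notin> S \<and> b \<in> S"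
  using assms
proof (induction rule: rtrancl_induct)
  case (step y z)
  then show ?case
    by (cases "y \<in> S") (auto simp: edge_rel_def)
qed simp

text \<open>Growing S one node at a time along paths into S, each new node brings a new edge.\<close>

lemma card_Diff_le_card_edges_within_Diff:
  assumes "finite E" "finite V" "S \<subseteq> V"
    and "\<forall>v\<in>V. \<exists>s\<in>S. (v, s) \<in> (edge_rel E V)\<^sup>*"
  shows "card (V - S) \<le> card (edges_within E V - edges_within E S)"
  using assms(3,4)
proof (induction "card (V - S)" arbitrary: S)
  case (Suc n S)
  obtain v where "v \<in> V - S"
    using Suc.hyps(2) by (metis card.empty all_not_in_conv nat.distinct(1))
  then obtain s where "s \<in> S" "(v, s) \<in> (edge_rel E V)\<^sup>*"
    using Suc.prems(2) by blast
  then obtain a b where ab: "{a, b} \<in> E" "a \<in> V" "b \<in> V" "a \<notin> S" "b \<in> S"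
    using rtrancl_edge_rel_enters \<open>v \<in> V - S\<close> by blast
  let ?F = "edges_within E V - edges_within E S"
  have card_Diff: "card (V - S) = Suc (card (V - insert a S))"
    using ab assms(2) card_Suc_Diff1[of "V - S" a] by (metis DiffI Diff_insert finite_Diff)
  have "card (V - insert a S) \<le> card (edges_within E V - edges_within E (insert a S))"
  proof (rule Suc.hyps(1))
    show "n = card (V - insert a S)" using card_Diff Suc.hyps(2) by simp
    show "insert a S \<subseteq> V" using ab Suc.prems(1) by blast
    show "\<forall>v\<in>V. \<exists>s\<in>insert a S. (v, s) \<in> (edge_rel E V)\<^sup>*" using Suc.prems(2) by blast
  qed
  also have "\<dots> \<le> card (?F - {{a, b}})"
    using assms(1) ab by (intro card_mono) (auto simp: edges_within_def)
  also have "\<dots> < card ?F"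
    using ab assms(1) by (intro card_Diff1_less) (auto simp: edges_within_def)
  finally show ?case using card_Diff by simp
qed simp

lemma is_tree_edge_subset: "is_tree N E \<Longrightarrow> e \<in> E \<Longrightarrow> e \<subseteq> N"
  unfolding is_tree_def by fastforce

lemma is_tree_finite_edges: "is_tree N E \<Longrightarrow> finite E"
proof -
  assume tree: "is_tree N E"
  then have "E \<subseteq> Pow N" and "finite N"
    using is_tree_edge_subset by (auto simp: is_tree_def)
  then show "finite E"
    using finite_subset by blast
qed

lemma card_edges_within_less:
  assumes tree: "is_tree N E" and "S \<subseteq> N" "S \<noteq> {}"
  shows "card (edges_within E S) < card S"
proof -
  have fin: "finite N" "finite E" and card_E: "card E = card N - 1"
    using tree is_tree_finite_edges[OF tree] unfolding is_tree_def by auto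
  have "edges_within E N = E"
    using is_tree_edge_subset[OF tree] by (auto simp: edges_within_def)
  moreover have "\<forall>v\<in>N. \<exists>s\<in>S. (v, s) \<in> (edge_rel E N)\<^sup>*"
    using tree \<open>S \<subseteq> N\<close> \<open>S \<noteq> {}\<close> unfolding is_tree_def connected_in_def by blast
  ultimately have "card (N - S) \<le> card (E - edges_within E S)"
    using card_Diff_le_card_edges_within_Diff[OF fin(2,1) \<open>S \<subseteq> N\<close>] by simp
  moreover have "card (N - S) = card N - card S" "card S \<le> card N" "0 < card S"
    using fin \<open>S \<subseteq> N\<close> \<open>S \<noteq> {}\<close> card_mono card_Diff_subset card_gt_0_iff finite_subset
    by metis+
  moreover have "edges_within E S \<subseteq> E"
    by (auto simp: edges_within_def)
  then have "card (E - edges_within E S) = card E - card (edges_within E S)"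
    "card (edges_within E S) \<le> card E"
    using fin(2) card_mono card_Diff_subset finite_subset by metis+
  ultimately show ?thesis using card_E by linarith
qed

lemma card_le_Suc_card_edges_within:
  assumes "finite E" "finite S" "connected_in E S"
  shows "card S \<le> Suc (card (edges_within E S))"
proof (cases "S = {}")
  case False
  then obtain s where "s \<in> S" by blast
  have "card (S - {s}) \<le> card (edges_within E S - edges_within E {s})"
    using assms \<open>s \<in> S\<close> unfolding connected_in_def
    by (intro card_Diff_le_card_edges_within_Diff) blast+
  also have "\<dots> \<le> card (edges_within E S)"
    using assms(1) by (intro card_mono) (auto simp: edges_within_def)
  finally show ?thesis
    using \<open>s \<in> S\<close> assms(2) card_Suc_Diff1 by fastforce
qed simp

text \<open>A connected set S spans at least card S - 1 edges, a nonempty subset of a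
  tree at most card S - 1. If three pairwise intersecting subtrees had no common node,
  inclusion-exclusion would make their union span at least as many edges as it has nodes.\<close>

lemma tree_Helly:
  assumes tree: "is_tree N E" and "A \<subseteq> N" "B \<subseteq> N" "C \<subseteq> N"
    and conn: "connected_in E A" "connected_in E B" "connected_in E C"
    and "A \<inter> B \<noteq> {}" "A \<inter> C \<noteq> {}" "B \<inter> C \<noteq> {}"
  shows "A \<inter> B \<inter> C \<noteq> {}"
proof
  assume disj: "A \<inter> B \<inter> C = {}"
  let ?e = "\<lambda>S. card (edges_within E S)"
  have fin: "finite N" "finite E"
    using tree is_tree_finite_edges by (auto simp: is_tree_def)
  then have finABC: "finite A" "finite B" "finite C"
    using \<open>A \<subseteq> N\<close> \<open>B \<subseteq> N\<close> \<open>C \<subseteq> N\<close> finite_subset by blast+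
  have fin_edges: "finite (edges_within E S)" for S
    using fin(2) by (simp add: edges_within_def)
  have "card A \<le> Suc (?e A)" "card B \<le> Suc (?e B)" "card C \<le> Suc (?e C)"
    using card_le_Suc_card_edges_within fin(2) finABC conn by blast+
  moreover have "Suc (?e (A \<inter> B)) \<le> card (A \<inter> B)" "Suc (?e (A \<inter> C)) \<le> card (A \<inter> C)"
    "Suc (?e (B \<inter> C)) \<le> card (B \<inter> C)"
    using card_edges_within_less[OF tree] assms(2-4,8-10) by (meson Suc_leI le_infI1)+
  moreover have "Suc (?e (A \<union> B \<union> C)) \<le> card (A \<union> B \<union> C)"
    using assms(2-4,8) by (intro Suc_leI card_edges_within_less[OF tree]) auto
  moreover have "card (edges_within E A \<union> edges_within E B \<union> edges_within E C) \<le> ?e (A \<union> B \<union> C)"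
    by (intro card_mono fin_edges) (auto simp: edges_within_def)
  moreover have "card A + card B + card C
      = card (A \<union> B \<union> C) + card (A \<inter> B) + card (A \<inter> C) + card (B \<inter> C)"
    using card_Un_Int3[OF finABC] disj by simp
  moreover have "?e A + ?e B + ?e C + ?e (A \<inter> B \<inter> C)
      = card (edges_within E A \<union> edges_within E B \<union> edges_within E C)
        + ?e (A \<inter> B) + ?e (A \<inter> C) + ?e (B \<inter> C)"
    using card_Un_Int3[OF fin_edges fin_edges fin_edges] by (simp add: edges_within_Int)
  ultimately show False
    by linarith
qed

lemma frac_edge_cover_greatest:
  assumes "B \<subseteq> qvars P"
    and "\<And>w. \<forall>i. 0 \<le> w i \<Longrightarrow>
      \<forall>x\<in>B. 1 \<le> (\<Sum>i\<in>{i. i < length P \<and> x \<in> P ! i \<inter> B}. w i) \<Longrightarrow>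
      c \<le> (\<Sum>i<length P. w i)"
  shows "c \<le> frac_edge_cover P B"
  unfolding frac_edge_cover_def
proof (rule cInf_greatest)
  have ones_cover: "1 \<le> (\<Sum>i\<in>{i. i < length P \<and> x \<in> P ! i \<inter> B}. 1::real)"
    if "x \<in> B" for x
  proof -
    obtain A where "A \<in> set P" "x \<in> A"
      using \<open>x \<in> B\<close> assms(1) by (auto simp: qvars_def)
    then obtain i where "i < length P" "x \<in> P ! i"
      by (metis in_set_conv_nth)
    then have "{i. i < length P \<and> x \<in> P ! i \<inter> B} \<noteq> {}"
      using \<open>x \<in> B\<close> by blast
    then show ?thesis
      by (simp add: Suc_leI card_gt_0_iff)
  qed
  have "(\<Sum>i<length P. 1::real) \<in> {\<Sum>i<length P. w i :: real |w. (\<forall>i. 0 \<le> w i) \<and>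
      (\<forall>x\<in>B. 1 \<le> (\<Sum>i\<in>{i. i < length P \<and> x \<in> P ! i \<inter> B}. w i))}"
    unfolding mem_Collect_eq by (rule exI[where x="\<lambda>_. (1::real)"]) (use ones_cover in auto)
  then show "{\<Sum>i<length P. w i :: real |w. (\<forall>i. 0 \<le> w i) \<and>
      (\<forall>x\<in>B. 1 \<le> (\<Sum>i\<in>{i. i < length P \<and> x \<in> P ! i \<inter> B}. w i))} \<noteq> {}"
    by (rule ex_in_conv[THEN iffD1, OF exI])
qed (use assms(2) in blast)

lemma frac_edge_cover_ge_three_halves:
  assumes "{u, v, z} \<subseteq> B" "B \<subseteq> qvars P" "\<not> (\<exists>A\<in>set P. {u, v, z} \<subseteq> A)"
  shows "3 / 2 \<le> frac_edge_cover P B"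
proof (rule frac_edge_cover_greatest[OF assms(2)])
  fix w :: "nat \<Rightarrow> real"
  assume w_nonneg: "\<forall>i. 0 \<le> w i"
    and covers: "\<forall>x\<in>B. 1 \<le> (\<Sum>i\<in>{i. i < length P \<and> x \<in> P ! i \<inter> B}. w i)"
  let ?load = "\<lambda>x. \<Sum>i<length P. if x \<in> P ! i then w i else 0"
  have load: "1 \<le> ?load x" if "x \<in> B" for x
  proof -
    have "?load x = sum w {i \<in> {..<length P}. x \<in> P ! i}"
      by (rule sum.inter_filter[symmetric]) simp
    also have "{i \<in> {..<length P}. x \<in> P ! i} = {i. i < length P \<and> x \<in> P ! i \<inter> B}"
      using that by auto
    finally show ?thesis
      using covers that by simp
  qed
  have "1 \<le> ?load u" "1 \<le> ?load v" "1 \<le> ?load z"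
    using assms(1) by (auto intro!: load)
  then have "3 \<le> ?load u + ?load v + ?load z"
    by linarith
  also have "\<dots> = (\<Sum>i<length P. (if u \<in> P ! i then w i else 0) + (if v \<in> P ! i then w i else 0)
      + (if z \<in> P ! i then w i else 0))"
    by (simp add: sum.distrib)
  also have "\<dots> \<le> (\<Sum>i<length P. 2 * w i)"
  proof (rule sum_mono)
    fix i assume "i \<in> {..<length P}"
    then have "\<not> {u, v, z} \<subseteq> P ! i"
      using assms(3) by auto
    then show "(if u \<in> P ! i then w i else 0) + (if v \<in> P ! i then w i else 0)
        + (if z \<in> P ! i then w i else 0) \<le> 2 * w i"
      using w_nonneg[rule_format, of i] by auto
  qed
  finally show "3 / 2 \<le> (\<Sum>i<length P. w i)"
    by (simp add: sum_distrib_left[symmetric])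
qed

lemma is_tree_decomp_single_bag: "is_tree_decomp P {0} {} (\<lambda>_. qvars P)"
proof -
  have conn: "connected_in {} S" if "S \<subseteq> {0}" for S :: "nat set"
    using that by (auto simp: connected_in_def)
  show ?thesis
    by (auto simp: is_tree_decomp_def is_tree_def qvars_def intro!: conn)
qed

lemma fhw_greatest:
  assumes "\<And>N E bag. is_tree_decomp P N E bag \<Longrightarrow> c \<le> Max ((\<lambda>t. frac_edge_cover P (bag t)) ` N)"
  shows "c \<le> fhw P"
  unfolding fhw_def
  by (rule cInf_greatest) (use assms is_tree_decomp_single_bag in blast)+

lemma fhw_ge_three_halves:
  assumes uv: "\<exists>A\<in>set P. {u, v} \<subseteq> A" and uz: "\<exists>A\<in>set P. {u, z} \<subseteq> A"
    and vz: "\<exists>A\<in>set P. {v, z} \<subseteq> A" and uvz: "\<not> (\<exists>A\<in>set P. {u, v, z} \<subseteq> A)"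
  shows "3 / 2 \<le> fhw P"
proof (rule fhw_greatest)
  fix N E bag
  assume "is_tree_decomp P N E bag"
  then have tree: "is_tree N E" and bags: "\<forall>t\<in>N. bag t \<subseteq> qvars P"
    and covers: "\<forall>A\<in>set P. \<exists>t\<in>N. A \<subseteq> bag t"
    and conn: "\<And>x. connected_in E {t\<in>N. x \<in> bag t}"
    unfolding is_tree_decomp_def by auto
  let ?T = "\<lambda>x. {t\<in>N. x \<in> bag t}"
  have meet: "?T a \<inter> ?T b \<noteq> {}" if ab: "\<exists>A\<in>set P. {a, b} \<subseteq> A" for a b
  proof -
    obtain A t where "A \<in> set P" "{a, b} \<subseteq> A" "t \<in> N" "A \<subseteq> bag t"
      using ab covers by meson
    then show ?thesis
      by blast
  qed
  have "?T u \<inter> ?T v \<inter> ?T z \<noteq> {}"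
    by (rule tree_Helly[OF tree _ _ _ conn conn conn meet[OF uv] meet[OF uz] meet[OF vz]]) auto
  then obtain t where "t \<in> N" "{u, v, z} \<subseteq> bag t"
    by blast
  then have "3 / 2 \<le> frac_edge_cover P (bag t)"
    using bags uvz by (intro frac_edge_cover_ge_three_halves) auto
  also have "\<dots> \<le> Max ((\<lambda>t. frac_edge_cover P (bag t)) ` N)"
    using tree \<open>t \<in> N\<close> by (intro Max_ge) (auto simp: is_tree_def)
  finally show "3 / 2 \<le> Max ((\<lambda>t. frac_edge_cover P (bag t)) ` N)" .
qed

lemma fhw_mv_component_le:
  assumes "\<sigma> permutes {..<length Q}"
  shows "fhw (mv_component Q \<sigma>) \<le> fhw_mv_ext Q"
proof -
  have "{fhw (mv_component Q \<sigma>) |\<sigma>. \<sigma> permutes {..<length Q}}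
      = (\<lambda>\<sigma>. fhw (mv_component Q \<sigma>)) ` {\<sigma>. \<sigma> permutes {..<length Q}}"
    by blast
  then show ?thesis
    unfolding fhw_mv_ext_def using assms finite_permutations[of "{..<length Q}"]
    by (intro Max_ge) auto
qed

lemma permutes_list_nth:
  assumes "distinct L" "set L = {..<length L}"
  shows "(\<lambda>p. if p < length L then L ! p else p) permutes {..<length L}"
proof (rule bij_imp_permutes)
  show "bij_betw (\<lambda>p. if p < length L then L ! p else p) {..<length L} {..<length L}"
    using bij_betw_nth[OF assms(1) refl assms(2)[symmetric]]
    by (rule bij_betw_cong[THEN iffD1, rotated]) simp
qed simp

lemma exists_permutes_filter_first:
  "\<exists>\<sigma> a. \<sigma> permutes {..<n::nat} \<and> (\<forall>p<n. P (\<sigma> p) \<longleftrightarrow> p < a)"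
proof -
  define L1 where "L1 = filter P [0..<n]"
  define L2 where "L2 = filter (Not \<circ> P) [0..<n]"
  define L where "L = L1 @ L2"
  have "length L = n"
    using sum_length_filter_compl[of P "[0..<n]"] by (simp add: L_def L1_def L2_def comp_def)
  moreover have "distinct L" "set L = {..<n}"
    by (auto simp: L_def L1_def L2_def)
  ultimately have perm: "(\<lambda>p. if p < n then L ! p else p) permutes {..<n}"
    using permutes_list_nth by metis
  have "P (L ! p) \<longleftrightarrow> p < length L1" if "p < n" for p
  proof (cases "p < length L1")
    case True
    then show ?thesis
      using nth_mem[OF True] by (simp add: L_def L1_def nth_append)
  next
    case False
    then have "p - length L1 < length L2"
      using that \<open>length L = n\<close> by (simp add: L_def)
    then show ?thesis
      using False nth_mem[of "p - length L1" L2] by (simp add: L_def L2_def nth_append)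
  qed
  then show ?thesis
    using perm by (intro exI[of _ "\<lambda>p. if p < n then L ! p else p"] exI[of _ "length L1"]) auto
qed

lemma set_mv_component:
  "set (mv_component Q \<sigma>) = (\<lambda>p. Inr ` {..p} \<union> Inl ` (Q ! \<sigma> p)) ` {..<length Q}"
  by (auto simp: mv_component_def)

lemma mv_component_triangle:
  assumes perm: "\<sigma> permutes {..<length Q}"
    and prefix: "\<forall>p<length Q. x \<in> Q ! \<sigma> p \<and> y \<in> Q ! \<sigma> p \<longleftrightarrow> p < a"
    and "\<not> atoms_of Q x \<subseteq> atoms_of Q y" "\<not> atoms_of Q y \<subseteq> atoms_of Q x"
    and "atoms_of Q x \<inter> atoms_of Q y \<noteq> {}"
  defines "P \<equiv> mv_component Q \<sigma>"
  shows "\<exists>A\<in>set P. {Inl x, Inl y} \<subseteq> A" "\<exists>A\<in>set P. {Inl x, Inr a} \<subseteq> A"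
    "\<exists>A\<in>set P. {Inl y, Inr a} \<subseteq> A" "\<not> (\<exists>A\<in>set P. {Inl x, Inl y, Inr a} \<subseteq> A)"
proof -
  have position: "\<exists>p<length Q. \<sigma> p = i" if "i < length Q" for i
    using permutes_image[OF perm] that by (metis imageE lessThan_iff)
  obtain i j k where "i < length Q" "x \<in> Q ! i" "y \<in> Q ! i"
    and "j < length Q" "x \<in> Q ! j" "y \<notin> Q ! j"
    and "k < length Q" "y \<in> Q ! k" "x \<notin> Q ! k"
    using assms(3-5) unfolding atoms_of_def by blast
  then obtain p1 p2 p3 where "p1 < length Q" "x \<in> Q ! \<sigma> p1" "y \<in> Q ! \<sigma> p1"
    and "p2 < length Q" "x \<in> Q ! \<sigma> p2" "a \<le> p2"
    and "p3 < length Q" "y \<in> Q ! \<sigma> p3" "a \<le> p3"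
    using position prefix by (metis not_le)
  then show "\<exists>A\<in>set P. {Inl x, Inl y} \<subseteq> A" "\<exists>A\<in>set P. {Inl x, Inr a} \<subseteq> A"
    "\<exists>A\<in>set P. {Inl y, Inr a} \<subseteq> A"
    unfolding P_def set_mv_component by blast+
  show "\<not> (\<exists>A\<in>set P. {Inl x, Inl y, Inr a} \<subseteq> A)"
    using prefix unfolding P_def set_mv_component by auto
qed

theorem mainTheorem8:
  fixes Q :: "'v query"
  assumes "\<forall>A\<in>set Q. finite A"
    and "\<not> hierarchical Q"
  shows "fhw_mv_ext Q \<ge> 3 / 2"
proof -
  obtain x y where xy: "\<not> atoms_of Q x \<subseteq> atoms_of Q y" "\<not> atoms_of Q y \<subseteq> atoms_of Q x"
    "atoms_of Q x \<inter> atoms_of Q y \<noteq> {}"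
    using assms(2) unfolding hierarchical_def by blast
  obtain \<sigma> a where perm: "\<sigma> permutes {..<length Q}"
    and prefix: "\<forall>p<length Q. x \<in> Q ! \<sigma> p \<and> y \<in> Q ! \<sigma> p \<longleftrightarrow> p < a"
    using exists_permutes_filter_first[of "length Q" "\<lambda>i. x \<in> Q ! i \<and> y \<in> Q ! i"] by blast
  have "3 / 2 \<le> fhw (mv_component Q \<sigma>)"
    using mv_component_triangle[OF perm prefix xy] by (rule fhw_ge_three_halves)
  also have "\<dots> \<le> fhw_mv_ext Q"
    using perm by (rule fhw_mv_component_le)
  finally show ?thesis .
qed

end
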